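(* Let $x_0\in(0,1)$ and let $p\in C([0,1])$ with $p>0$ on $[0,1]\setminus\{x_0\}$, $p(x_0)=0$, and suppose there exists $q>1$ such that $x\mapsto p(x)/|x-x_0|^q$ is non increasing on the left of $x_0$ and non decreasing on the right of $x_0$. Then: 1. there exists a constant $C_{HP,1}>0$ such that for every $w\in H^1(0,1)$ with $w'(0)=w'(1)=0$, \[\int_0^1\frac{p(x)}{(x-x_0)^2}w^2(x)\,dx\le C_{HP,1}\|w\|^2_{H^1(0,1)};\] 2. for every $y_0\in[0,1]$ there exists $C_{HP,2}>0$ such that for every $w\in H^1(0,1)$ with $w'(0)=w'(1)=0$, \[\int_0^1\frac{p(x)}{(x-x_0)^2}w^2(x)\,dx\le C_{HP,2}\Big(\int_0^1(w')^2(y)\,dy+w^2(y_0)\Big).\] *)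

theory Defs
  imports "HOL-Analysis.Analysis"
begin

text \<open>\<open>H1_with_deriv w g\<close>: the function w belongs to H^1(0,1) (in its absolutely
continuous representative) and g is (a representative of) its weak derivative w',
i.e. g is square integrable on [0,1] and w(x) = w(0) + integral of g over [0,x]
for all x in [0,1].\<close>
definition H1_with_deriv :: "(real \<Rightarrow> real) \<Rightarrow> (real \<Rightarrow> real) \<Rightarrow> bool" where
  "H1_with_deriv w g \<longleftrightarrow>
     g \<in> borel_measurable lborel \<and>
     set_integrable lborel {0..1} (\<lambda>x. (g x)\<^sup>2) \<and>
     (\<forall>x\<in>{0..1}. w x = w 0 + (LBINT t=0..x. g t))"

definition H1_norm_sq :: "(real \<Rightarrow> real) \<Rightarrow> (real \<Rightarrow> real) \<Rightarrow> real" where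
  "H1_norm_sq w g = (LINT x:{0..1}|lborel. (w x)\<^sup>2) + (LINT x:{0..1}|lborel. (g x)\<^sup>2)"

end

theory Submission
  imports Defs
begin

text \<open>The monotonicity hypotheses bound \<open>p x / \<bar>x - x\<^sub>0\<bar> powr q\<close> by its larger endpoint
value \<open>K\<close>, so the weight satisfies \<open>p x / (x - x\<^sub>0)\<^sup>2 \<le> K \<bar>x - x\<^sub>0\<bar>\<^bsup>q-2\<^esup>\<close>, which is integrable
on \<open>[0,1]\<close> because \<open>q - 2 > -1\<close>. On the other hand an \<open>H\<^sup>1\<close> function on \<open>[0,1]\<close> is bounded:
by Cauchy--Schwarz \<open>w(x)\<^sup>2 \<le> 2 w(y)\<^sup>2 + 8 \<parallel>w'\<parallel>\<^sup>2\<close> for all \<open>x, y\<close>, and choosing \<open>y\<close> where \<open>w\<^sup>2\<close> is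
minimal gives \<open>w(y)\<^sup>2 \<le> \<parallel>w\<parallel>\<^sup>2\<close>.\<close>

lemma set_integral_square_le:
  fixes f :: "'a \<Rightarrow> real"
  assumes f[measurable]: "f \<in> borel_measurable M" and A[measurable]: "A \<in> sets M"
    and finite: "emeasure M A < \<infinity>" and sq: "set_integrable M A (\<lambda>x. (f x)\<^sup>2)"
  shows "(LINT x:A|M. f x)\<^sup>2 \<le> measure M A * (LINT x:A|M. (f x)\<^sup>2)"
proof -
  define F where "F x = ennreal (indicator A x * \<bar>f x\<bar>)" for x
  have "ennreal \<bar>LINT x:A|M. f x\<bar> \<le> (\<integral>\<^sup>+x. F x \<partial>M)"
  proof (cases "set_integrable M A f")
    case True
    then have "ennreal \<bar>LINT x:A|M. f x\<bar> \<le> (\<integral>\<^sup>+x. norm (indicator A x *\<^sub>R f x) \<partial>M)"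
      unfolding set_integrable_def set_lebesgue_integral_def
      using integral_norm_bound_ennreal by fastforce
    also have "\<dots> = (\<integral>\<^sup>+x. F x \<partial>M)"
      unfolding F_def by (intro nn_integral_cong) (auto simp: indicator_def)
    finally show ?thesis .
  qed (simp add: set_integrable_def set_lebesgue_integral_def not_integrable_integral_eq)
  then have "ennreal ((LINT x:A|M. f x)\<^sup>2) \<le> (\<integral>\<^sup>+x. F x \<partial>M)\<^sup>2"
    by (metis abs_ge_zero ennreal_power power2_abs power_mono zero_le)
  also have "(\<integral>\<^sup>+x. F x \<partial>M) = (\<integral>\<^sup>+x. F x * indicator A x \<partial>M)"
    unfolding F_def by (intro nn_integral_cong) (auto simp: indicator_def)
  also have "(\<integral>\<^sup>+x. F x * indicator A x \<partial>M)\<^sup>2 \<le> (\<integral>\<^sup>+x. F x ^ 2 \<partial>M) * (\<integral>\<^sup>+x. (indicator A x)\<^sup>2 \<partial>M)"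
    by (rule Cauchy_Schwarz_nn_integral) (auto simp: F_def)
  also have "(\<integral>\<^sup>+x. F x ^ 2 \<partial>M) = ennreal (LINT x:A|M. (f x)\<^sup>2)"
  proof -
    have "(\<integral>\<^sup>+x. F x ^ 2 \<partial>M) = (\<integral>\<^sup>+x. ennreal (indicator A x *\<^sub>R (f x)\<^sup>2) \<partial>M)"
      unfolding F_def by (intro nn_integral_cong) (auto simp: indicator_def ennreal_power)
    also have "\<dots> = ennreal (LINT x:A|M. (f x)\<^sup>2)"
      using sq unfolding set_integrable_def set_lebesgue_integral_def
      by (intro nn_integral_eq_integral) auto
    finally show ?thesis .
  qed
  also have "(\<integral>\<^sup>+x. (indicator A x)\<^sup>2 \<partial>M) = ennreal (measure M A)"
  proof -
    have "(\<integral>\<^sup>+x. (indicator A x)\<^sup>2 \<partial>M) = (\<integral>\<^sup>+x. indicator A x \<partial>M)"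
      by (intro nn_integral_cong) (auto simp: indicator_def)
    then show ?thesis
      using finite by (simp add: emeasure_eq_ennreal_measure)
  qed
  finally have "ennreal ((LINT x:A|M. f x)\<^sup>2) \<le> ennreal (measure M A * (LINT x:A|M. (f x)\<^sup>2))"
    by (simp add: ennreal_mult' mult.commute)
  moreover have "0 \<le> (LINT x:A|M. (f x)\<^sup>2)"
    unfolding set_lebesgue_integral_def by (intro integral_nonneg_AE) auto
  ultimately show ?thesis
    by (simp add: ennreal_le_iff)
qed

lemma set_integral_square_le_interval:
  fixes g :: "real \<Rightarrow> real"
  assumes g[measurable]: "g \<in> borel_measurable lborel"
    and sq: "set_integrable lborel {a..b} (\<lambda>t. (g t)\<^sup>2)"
    and x: "x \<in> {a..b}"
  shows "(LBINT t=a..x. g t)\<^sup>2 \<le> (x - a) * (LINT t:{a..b}|lborel. (g t)\<^sup>2)"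
proof -
  have sq_x: "set_integrable lborel {a..x} (\<lambda>t. (g t)\<^sup>2)"
    by (rule set_integrable_subset[OF sq]) (use x in auto)
  have "(LBINT t=a..x. g t)\<^sup>2 \<le> measure lborel {a..x} * (LINT t:{a..x}|lborel. (g t)\<^sup>2)"
    using x set_integral_square_le[OF g _ _ sq_x] by (simp add: interval_integral_Icc)
  also have "\<dots> \<le> (x - a) * (LINT t:{a..b}|lborel. (g t)\<^sup>2)"
  proof (intro mult_mono)
    have "integral {a..x} (\<lambda>t. (g t)\<^sup>2) \<le> integral {a..b} (\<lambda>t. (g t)\<^sup>2)"
      using x set_borel_integral_eq_integral(1)[OF sq_x] set_borel_integral_eq_integral(1)[OF sq]
      by (intro integral_subset_le) auto
    then show "(LINT t:{a..x}|lborel. (g t)\<^sup>2) \<le> (LINT t:{a..b}|lborel. (g t)\<^sup>2)"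
      by (simp add: set_borel_integral_eq_integral(2)[OF sq_x] set_borel_integral_eq_integral(2)[OF sq])
    show "0 \<le> (LINT t:{a..x}|lborel. (g t)\<^sup>2)"
      unfolding set_lebesgue_integral_def by (intro integral_nonneg_AE) auto
  qed (use x in auto)
  finally show ?thesis .
qed

lemma H1_with_deriv_integrable:
  assumes "H1_with_deriv w g"
  shows "set_integrable lborel {0..1} g"
proof -
  have g[measurable]: "g \<in> borel_measurable lborel"
    and sq: "set_integrable lborel {0..1} (\<lambda>x. (g x)\<^sup>2)"
    using assms unfolding H1_with_deriv_def by auto
  have "set_integrable lborel {0..1::real} (\<lambda>x. 1 + (g x)\<^sup>2)"
    using set_integral_add(1)[OF _ sq, of "\<lambda>_. 1"] by (simp add: set_integrable_def)
  then show ?thesis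
  proof (rule set_integrable_bound)
    show "set_borel_measurable lborel {0..1} g"
      unfolding set_borel_measurable_def by measurable
    have "\<bar>g x\<bar> \<le> 1 + (g x)\<^sup>2" for x
      using zero_le_power2[of "\<bar>g x\<bar> - 1/2"] by (simp add: power2_eq_square algebra_simps)
    then show "AE x in lborel. x \<in> {0..1} \<longrightarrow> norm (g x) \<le> norm (1 + (g x)\<^sup>2)"
      by simp
  qed
qed

lemma H1_with_deriv_continuous_on:
  assumes H: "H1_with_deriv w g"
  shows "continuous_on {0..1} w"
proof -
  have gi: "set_integrable lborel {0..1} g"
    using H by (rule H1_with_deriv_integrable)
  have w: "w x = w 0 + integral {0..x} g" if x: "x \<in> {0..1}" for x
  proof -
    have "w x = w 0 + (LBINT t=0..x. g t)"
      using H x unfolding H1_with_deriv_def by blast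
    also have "(LBINT t=0..x. g t) = integral {0..x} g"
      using interval_integral_eq_integral[of 0 x g] set_integrable_subset[OF gi, of "{0..x}"] x
      by (simp add: zero_ereal_def)
    finally show ?thesis .
  qed
  have "continuous_on {0..1} (\<lambda>x. w 0 + integral {0..x} g)"
    by (intro continuous_intros indefinite_integral_continuous_1 set_borel_integral_eq_integral(1)[OF gi])
  then show ?thesis
    by (rule continuous_on_eq) (metis w)
qed

lemma H1_with_deriv_sq_le_point:
  assumes H: "H1_with_deriv w g" and x: "x \<in> {0..1}" and y: "y \<in> {0..1}"
  shows "(w x)\<^sup>2 \<le> 2 * (w y)\<^sup>2 + 8 * (LINT t:{0..1}|lborel. (g t)\<^sup>2)"
proof -
  define S where "S = (LINT t:{0..1}|lborel. (g t)\<^sup>2)"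
  define I where "I z = (LBINT t=0..z. g t)" for z :: real
  have g: "g \<in> borel_measurable lborel" and sq: "set_integrable lborel {0..1} (\<lambda>t. (g t)\<^sup>2)"
    and w: "\<forall>z\<in>{0..1}. w z = w 0 + I z"
    using H unfolding H1_with_deriv_def I_def by blast+
  have S0: "0 \<le> S"
    unfolding S_def set_lebesgue_integral_def by (intro integral_nonneg_AE) auto
  have I_sq: "(I z)\<^sup>2 \<le> S" if "z \<in> {0..1}" for z
  proof -
    have "(I z)\<^sup>2 \<le> z * S"
      unfolding I_def S_def using set_integral_square_le_interval[OF g sq that]
      by (simp add: zero_ereal_def)
    also have "\<dots> \<le> S"
      using that S0 by (simp add: mult_left_le_one_le)
    finally show ?thesis .
  qed
  have "(I x - I y)\<^sup>2 + (I x + I y)\<^sup>2 = 2 * (I x)\<^sup>2 + 2 * (I y)\<^sup>2"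
    by algebra
  then have "(I x - I y)\<^sup>2 \<le> 4 * S"
    using I_sq[OF x] I_sq[OF y] zero_le_power2[of "I x + I y"] by linarith
  moreover have "w x - w y = I x - I y"
    using w x y by (metis add_diff_cancel_left)
  ultimately have "(w x - w y)\<^sup>2 \<le> 4 * S"
    by simp
  moreover have "(w x)\<^sup>2 + (w x - 2 * w y)\<^sup>2 = 2 * (w y)\<^sup>2 + 2 * (w x - w y)\<^sup>2"
    by algebra
  ultimately show ?thesis
    using zero_le_power2[of "w x - 2 * w y"] unfolding S_def by linarith
qed

lemma H1_with_deriv_sq_le_H1_norm_sq:
  assumes H: "H1_with_deriv w g" and x: "x \<in> {0..1}"
  shows "(w x)\<^sup>2 \<le> 8 * H1_norm_sq w g"
proof -
  have c: "continuous_on {0..1} (\<lambda>x. (w x)\<^sup>2)"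
    using H1_with_deriv_continuous_on[OF H] by (intro continuous_intros)
  obtain y where y: "y \<in> {0..1}" and y_min: "\<forall>z\<in>{0..1}. (w y)\<^sup>2 \<le> (w z)\<^sup>2"
    using continuous_attains_inf[OF compact_Icc _ c] by auto
  have "(w y)\<^sup>2 = (LINT z:{0..1::real}|lborel. (w y)\<^sup>2)"
    by (simp add: set_lebesgue_integral_def)
  also have "\<dots> \<le> (LINT z:{0..1}|lborel. (w z)\<^sup>2)"
    using y_min borel_integrable_compact[OF compact_Icc c]
    by (intro set_integral_mono) (auto simp: set_integrable_def)
  finally have "(w y)\<^sup>2 \<le> (LINT z:{0..1}|lborel. (w z)\<^sup>2)" .
  moreover have "0 \<le> (LINT t:{0..1}|lborel. (g t)\<^sup>2)"
    unfolding set_lebesgue_integral_def by (intro integral_nonneg_AE) auto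
  ultimately show ?thesis
    using H1_with_deriv_sq_le_point[OF H x y] zero_le_power2[of "w y"]
    unfolding H1_norm_sq_def distrib_left by linarith
qed

lemma nn_integral_abs_powr_le:
  fixes a x\<^sub>0 :: real
  assumes a: "a > -1" and x0: "x\<^sub>0 \<in> {0..1}"
  shows "(\<integral>\<^sup>+x. ennreal (\<bar>x - x\<^sub>0\<bar> powr a) * indicator {0..1} x \<partial>lborel) \<le> ennreal (2 / (a + 1))"
proof -
  define f where "f x = indicator {0..1} x * x powr a" for x :: real
  have f[measurable]: "f \<in> borel_measurable borel"
    unfolding f_def by measurable
  have "((\<lambda>x. x powr a) has_integral (1 / (a + 1))) {0..1}"
    using has_integral_powr_from_0[of a 1] a by simp
  then have "((\<lambda>x. if x \<in> {0..1} then x powr a else 0) has_integral (1 / (a + 1))) UNIV"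
    by (subst has_integral_restrict_UNIV)
  moreover have "(\<lambda>x. if x \<in> {0..1} then x powr a else 0) = f"
    unfolding f_def by (auto simp: indicator_def)
  ultimately have "(f has_integral (1 / (a + 1))) UNIV"
    by simp
  moreover have "0 \<le> f x" for x
    unfolding f_def by (simp add: indicator_def)
  ultimately have f_int: "(\<integral>\<^sup>+x. ennreal (f x) \<partial>lborel) = ennreal (1 / (a + 1))"
    using nn_integral_has_integral_lborel[OF f] by blast
  have f_int_reflected: "(\<integral>\<^sup>+x. ennreal (f (- x)) \<partial>lborel) = ennreal (1 / (a + 1))"
    using nn_integral_real_affine[of "\<lambda>x. ennreal (f x)" "-1" 0] f_int by simp
  define h where "h x = ennreal (\<bar>x - x\<^sub>0\<bar> powr a) * indicator {0..1} x" for x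
  have "(\<integral>\<^sup>+x. h x \<partial>lborel) = (\<integral>\<^sup>+x. h (x\<^sub>0 + x) \<partial>lborel)"
    using nn_integral_real_affine[of h 1 x\<^sub>0] unfolding h_def by simp
  also have "\<dots> \<le> (\<integral>\<^sup>+x. ennreal (f x) + ennreal (f (- x)) \<partial>lborel)"
    \<comment> \<open>after the shift, \<open>[0,1]\<close> lies in \<open>[-1,1]\<close>, where \<open>\<bar>x\<bar> powr a\<close> is \<open>f x + f (- x)\<close>\<close>
  proof (intro nn_integral_mono)
    fix x :: real
    show "h (x\<^sub>0 + x) \<le> ennreal (f x) + ennreal (f (- x))"
    proof (cases "x\<^sub>0 + x \<in> {0..1}")
      case True
      then have "(0 \<le> x \<and> x \<le> 1) \<or> (0 \<le> - x \<and> - x \<le> 1)"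
        using x0 by auto
      then show ?thesis
        using True unfolding h_def f_def by (auto simp: indicator_def)
    qed (simp add: h_def)
  qed
  also have "\<dots> = ennreal (2 / (a + 1))"
    using f_int f_int_reflected a by (simp add: nn_integral_add flip: ennreal_plus)
  finally show ?thesis
    unfolding h_def .
qed

lemma weight_le_powr:
  fixes p :: "real \<Rightarrow> real" and x\<^sub>0 q :: real
  assumes x0: "x\<^sub>0 \<in> {0<..<1}" and p0: "0 \<le> p 0"
    and mono_left: "\<forall>x\<in>{0..<x\<^sub>0}. \<forall>y\<in>{0..<x\<^sub>0}. x \<le> y \<longrightarrow>
                     p y / \<bar>y - x\<^sub>0\<bar> powr q \<le> p x / \<bar>x - x\<^sub>0\<bar> powr q"
    and mono_right: "\<forall>x\<in>{x\<^sub>0<..1}. \<forall>y\<in>{x\<^sub>0<..1}. x \<le> y \<longrightarrow>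
                     p x / \<bar>x - x\<^sub>0\<bar> powr q \<le> p y / \<bar>y - x\<^sub>0\<bar> powr q"
  obtains K where "0 \<le> K" and "\<forall>x\<in>{0..1}. p x / (x - x\<^sub>0)\<^sup>2 \<le> K * \<bar>x - x\<^sub>0\<bar> powr (q - 2)"
proof
  define K where "K = max (p 0 / \<bar>0 - x\<^sub>0\<bar> powr q) (p 1 / \<bar>1 - x\<^sub>0\<bar> powr q)"
  show "0 \<le> K"
    unfolding K_def using p0 by (simp add: le_max_iff_disj)
  show "\<forall>x\<in>{0..1}. p x / (x - x\<^sub>0)\<^sup>2 \<le> K * \<bar>x - x\<^sub>0\<bar> powr (q - 2)"
  proof
    fix x :: real assume x: "x \<in> {0..1}"
    show "p x / (x - x\<^sub>0)\<^sup>2 \<le> K * \<bar>x - x\<^sub>0\<bar> powr (q - 2)"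
    proof (cases "x = x\<^sub>0")
      case False
      then have d: "\<bar>x - x\<^sub>0\<bar> > 0" by simp
      have "p x / \<bar>x - x\<^sub>0\<bar> powr q \<le> K"
        using mono_left[rule_format, of 0 x] mono_right[rule_format, of x 1] x x0 False
        unfolding K_def by (cases "x < x\<^sub>0") auto
      then have "p x \<le> K * \<bar>x - x\<^sub>0\<bar> powr q"
        using d by (simp add: divide_le_eq)
      then have "p x / \<bar>x - x\<^sub>0\<bar> powr 2 \<le> K * \<bar>x - x\<^sub>0\<bar> powr q / \<bar>x - x\<^sub>0\<bar> powr 2"
        by (intro divide_right_mono) auto
      then show ?thesis
        using d by (simp add: powr_diff powr_numeral)
    qed simp
  qed
qed

lemma weighted_nn_integral_le:
  fixes p w :: "real \<Rightarrow> real" and K B q x\<^sub>0 :: real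
  assumes K: "0 \<le> K" and q: "q > 1" and x0: "x\<^sub>0 \<in> {0..1}"
    and weight: "\<forall>x\<in>{0..1}. p x / (x - x\<^sub>0)\<^sup>2 \<le> K * \<bar>x - x\<^sub>0\<bar> powr (q - 2)"
    and w: "\<forall>x\<in>{0..1}. (w x)\<^sup>2 \<le> B"
  shows "(\<integral>\<^sup>+ x\<in>{0..1}. ennreal (p x / (x - x\<^sub>0)\<^sup>2 * (w x)\<^sup>2) \<partial>lborel)
           \<le> ennreal (K * B * (2 / (q - 1)))"
proof -
  have "(w 0)\<^sup>2 \<le> B"
    using w by simp
  then have B: "0 \<le> B"
    using zero_le_power2[of "w 0"] by linarith
  have "(\<integral>\<^sup>+ x\<in>{0..1}. ennreal (p x / (x - x\<^sub>0)\<^sup>2 * (w x)\<^sup>2) \<partial>lborel)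
      \<le> (\<integral>\<^sup>+x. ennreal (K * B) * (ennreal (\<bar>x - x\<^sub>0\<bar> powr (q - 2)) * indicator {0..1} x) \<partial>lborel)"
  proof (intro nn_integral_mono)
    fix x :: real
    show "ennreal (p x / (x - x\<^sub>0)\<^sup>2 * (w x)\<^sup>2) * indicator {0..1} x
        \<le> ennreal (K * B) * (ennreal (\<bar>x - x\<^sub>0\<bar> powr (q - 2)) * indicator {0..1} x)"
    proof (cases "x \<in> {0..1}")
      case True
      then have "p x / (x - x\<^sub>0)\<^sup>2 * (w x)\<^sup>2 \<le> K * \<bar>x - x\<^sub>0\<bar> powr (q - 2) * B"
        using weight w K by (intro mult_mono) auto
      then have "ennreal (p x / (x - x\<^sub>0)\<^sup>2 * (w x)\<^sup>2) \<le> ennreal (K * B) * ennreal (\<bar>x - x\<^sub>0\<bar> powr (q - 2))"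
        using K B by (simp add: ennreal_mult'' [symmetric] ennreal_leI mult_ac)
      then show ?thesis
        using True by simp
    qed simp
  qed
  also have "\<dots> = ennreal (K * B) * (\<integral>\<^sup>+x. ennreal (\<bar>x - x\<^sub>0\<bar> powr (q - 2)) * indicator {0..1} x \<partial>lborel)"
    by (rule nn_integral_cmult) measurable
  also have "\<dots> \<le> ennreal (K * B) * ennreal (2 / (q - 1))"
    using nn_integral_abs_powr_le[of "q - 2" x\<^sub>0] q x0 by (intro mult_left_mono) auto
  also have "\<dots> = ennreal (K * B * (2 / (q - 1)))"
    using K B q by (intro ennreal_mult[symmetric]) auto
  finally show ?thesis .
qed

lemma weighted_nn_integral_le_H1_norm_sq:
  fixes p w g :: "real \<Rightarrow> real" and K q x\<^sub>0 :: real
  assumes K: "0 \<le> K" and q: "q > 1" and x0: "x\<^sub>0 \<in> {0..1}"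
    and weight: "\<forall>x\<in>{0..1}. p x / (x - x\<^sub>0)\<^sup>2 \<le> K * \<bar>x - x\<^sub>0\<bar> powr (q - 2)"
    and H: "H1_with_deriv w g"
  shows "(\<integral>\<^sup>+ x\<in>{0..1}. ennreal (p x / (x - x\<^sub>0)\<^sup>2 * (w x)\<^sup>2) \<partial>lborel)
           \<le> ennreal ((8 * (K * (2 / (q - 1))) + 1) * H1_norm_sq w g)"
proof -
  define J where "J = K * (2 / (q - 1))"
  define N where "N = H1_norm_sq w g"
  have J: "0 \<le> J"
    unfolding J_def using K q by simp
  have "(w 0)\<^sup>2 \<le> 8 * N"
    unfolding N_def using H1_with_deriv_sq_le_H1_norm_sq[OF H] by simp
  then have N: "0 \<le> N"
    using zero_le_power2[of "w 0"] by linarith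
  have "(\<integral>\<^sup>+ x\<in>{0..1}. ennreal (p x / (x - x\<^sub>0)\<^sup>2 * (w x)\<^sup>2) \<partial>lborel) \<le> ennreal (K * (8 * N) * (2 / (q - 1)))"
    by (rule weighted_nn_integral_le[OF K q x0 weight]) (use H1_with_deriv_sq_le_H1_norm_sq[OF H] N_def in blast)
  also have "K * (8 * N) * (2 / (q - 1)) = 8 * J * N"
    unfolding J_def by simp
  also have "8 * J * N \<le> (8 * J + 1) * N"
    using N by (simp add: algebra_simps)
  finally show ?thesis
    unfolding J_def N_def by (simp add: ennreal_leI)
qed

lemma weighted_nn_integral_le_deriv_point:
  fixes p w g :: "real \<Rightarrow> real" and K q x\<^sub>0 y\<^sub>0 :: real
  assumes K: "0 \<le> K" and q: "q > 1" and x0: "x\<^sub>0 \<in> {0..1}"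
    and weight: "\<forall>x\<in>{0..1}. p x / (x - x\<^sub>0)\<^sup>2 \<le> K * \<bar>x - x\<^sub>0\<bar> powr (q - 2)"
    and H: "H1_with_deriv w g" and y0: "y\<^sub>0 \<in> {0..1}"
  shows "(\<integral>\<^sup>+ x\<in>{0..1}. ennreal (p x / (x - x\<^sub>0)\<^sup>2 * (w x)\<^sup>2) \<partial>lborel)
           \<le> ennreal ((8 * (K * (2 / (q - 1))) + 1) * ((LINT y:{0..1}|lborel. (g y)\<^sup>2) + (w y\<^sub>0)\<^sup>2))"
proof -
  define J where "J = K * (2 / (q - 1))"
  define S where "S = (LINT y:{0..1}|lborel. (g y)\<^sup>2)"
  have J: "0 \<le> J"
    unfolding J_def using K q by simp
  have S: "0 \<le> S"
    unfolding S_def set_lebesgue_integral_def by (intro integral_nonneg_AE) auto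
  have "(\<integral>\<^sup>+ x\<in>{0..1}. ennreal (p x / (x - x\<^sub>0)\<^sup>2 * (w x)\<^sup>2) \<partial>lborel)
      \<le> ennreal (K * (2 * (w y\<^sub>0)\<^sup>2 + 8 * S) * (2 / (q - 1)))"
    by (rule weighted_nn_integral_le[OF K q x0 weight]) (use H1_with_deriv_sq_le_point[OF H _ y0] S_def in blast)
  also have "K * (2 * (w y\<^sub>0)\<^sup>2 + 8 * S) * (2 / (q - 1)) = J * (2 * (w y\<^sub>0)\<^sup>2 + 8 * S)"
    unfolding J_def by simp
  also have "J * (2 * (w y\<^sub>0)\<^sup>2 + 8 * S) \<le> (8 * J + 1) * (S + (w y\<^sub>0)\<^sup>2)"
    using J S mult_nonneg_nonneg[OF J zero_le_power2[of "w y\<^sub>0"]] by (simp add: algebra_simps)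
  finally show ?thesis
    unfolding J_def S_def by (simp add: ennreal_leI)
qed

theorem corollary2p10:
  fixes p :: "real \<Rightarrow> real" and x\<^sub>0 q :: real
  assumes x0: "x\<^sub>0 \<in> {0<..<1}"
    and pcont: "continuous_on {0..1} p"
    and ppos: "\<forall>x\<in>{0..1} - {x\<^sub>0}. p x > 0"
    and pzero: "p x\<^sub>0 = 0"
    and q: "q > 1"
    and mono_left: "\<forall>x\<in>{0..<x\<^sub>0}. \<forall>y\<in>{0..<x\<^sub>0}. x \<le> y \<longrightarrow>
                     p y / \<bar>y - x\<^sub>0\<bar> powr q \<le> p x / \<bar>x - x\<^sub>0\<bar> powr q"
    and mono_right: "\<forall>x\<in>{x\<^sub>0<..1}. \<forall>y\<in>{x\<^sub>0<..1}. x \<le> y \<longrightarrow>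
                     p x / \<bar>x - x\<^sub>0\<bar> powr q \<le> p y / \<bar>y - x\<^sub>0\<bar> powr q"
  shows "(\<exists>C>0. \<forall>w g. H1_with_deriv w g
              \<and> (w has_real_derivative 0) (at 0 within {0..1})
              \<and> (w has_real_derivative 0) (at 1 within {0..1}) \<longrightarrow>
            (\<integral>\<^sup>+ x\<in>{0..1}. ennreal (p x / (x - x\<^sub>0)\<^sup>2 * (w x)\<^sup>2) \<partial>lborel)
              \<le> ennreal (C * H1_norm_sq w g))
       \<and> (\<forall>y\<^sub>0\<in>{0..1}. \<exists>C>0. \<forall>w g. H1_with_deriv w g
              \<and> (w has_real_derivative 0) (at 0 within {0..1})
              \<and> (w has_real_derivative 0) (at 1 within {0..1}) \<longrightarrow>
            (\<integral>\<^sup>+ x\<in>{0..1}. ennreal (p x / (x - x\<^sub>0)\<^sup>2 * (w x)\<^sup>2) \<partial>lborel)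
              \<le> ennreal (C * ((LINT y:{0..1}|lborel. (g y)\<^sup>2) + (w y\<^sub>0)\<^sup>2)))"
proof -
  have "0 \<le> p 0"
    using ppos x0 by (simp add: less_imp_le)
  then obtain K where K: "0 \<le> K"
    and weight: "\<forall>x\<in>{0..1}. p x / (x - x\<^sub>0)\<^sup>2 \<le> K * \<bar>x - x\<^sub>0\<bar> powr (q - 2)"
    using weight_le_powr[OF x0 _ mono_left mono_right] by blast
  have x0': "x\<^sub>0 \<in> {0..1}"
    using x0 by simp
  have "0 < 8 * (K * (2 / (q - 1))) + 1"
    using K q by (simp add: add_nonneg_pos)
  then show ?thesis
    using weighted_nn_integral_le_H1_norm_sq[OF K q x0' weight]
      weighted_nn_integral_le_deriv_point[OF K q x0' weight] by blast
qed

end
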